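(* For $n\in\{0,1,2,\dots\}$ let \[ d_n=\frac{(-1)^n}{n!}\sum_{k=0}^{n}(-1)^kS(n,k)(2k-3)!!. \] Then $d_n\ge0$ for every $n\in\mathbb{N}=\{1,2,\dots\}$.
   Context: $S(n,k)$ are the Stirling numbers of the second kind, given by $\frac{(e^x-1)^k}{k!}=\sum_{n\ge k}S(n,k)\frac{x^n}{n!}$. Double factorials: $(2j-1)!!=1\cdot3\cdots(2j-1)$ for $j\ge1$, and $[-(2j+1)]!!=(-1)^j/(2j-1)!!$ for $j\ge0$, so $(-1)!!=1$ and $(-3)!!=-1$. *)

theory Defs
  imports Complex_Main "HOL-Combinatorics.Stirling"
begin

text \<open>odd_dfact j = (2j-1)!! for integer j: for j >= 1 the product 1*3*...*(2j-1);
  for j = -i <= 0 it is (-(2i+1))!! = (-1)^i / (2i-1)!!, so (-1)!! = 1 and (-3)!! = -1.\<close>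

definition odd_dfact :: "int \<Rightarrow> real" where
  "odd_dfact j =
     (if j \<ge> 1 then (\<Prod>i=1..nat j. real (2*i - 1))
      else (-1) ^ nat (-j) / (\<Prod>i=1..nat (-j). real (2*i - 1)))"

definition d_seq :: "nat \<Rightarrow> real" where
  "d_seq n = (-1) ^ n / fact n *
     (\<Sum>k=0..n. (-1) ^ k * real (Stirling n k) * odd_dfact (int k - 1))"

end

theory Submission
  imports Defs "HOL-Computational_Algebra.Formal_Power_Series"
begin

text \<open>
  The exponential generating function of (-1)^k (2k-3)!! is B(t) = -sqrt(1 + 2t), and that of
  c^n S(n,k) for fixed k is (e^(cx) - 1)^k / k!. Hence the exponential generating function of
  d_n is D(x) = B(e^(-x) - 1), so D^2 = 2 e^(-x) - 1 and 2 D D' + D^2 + 1 = 0. Comparing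
  coefficients, with d_0 = -1 and d_1 = 1, expresses 2 (n+1) d_(n+1) as a sum of products of
  d_1, ..., d_n, and nonnegativity follows by induction. Square roots are never formed:
  B^2 = 1 + 2t follows from the linear equation (1 + 2t) B' = B, which is the recurrence of
  the double factorials, by uniqueness of power series solutions.
\<close>

unbundle fps_syntax

lemma fps_deriv_eq_mult_imp_eq_0:
  fixes q C :: "'a::field_char_0 fps"
  assumes ode: "fps_deriv q = C * q" and q0: "q $ 0 = 0"
  shows "q = 0"
proof -
  have "\<forall>m\<le>n. q $ m = 0" for n
  proof (induction n)
    case 0
    then show ?case using q0 by simp
  next
    case (Suc n)
    have "of_nat (Suc n) * q $ Suc n = (C * q) $ n"
      using ode by (metis fps_deriv_nth Suc_eq_plus1)
    also have "\<dots> = 0"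
      using Suc.IH by (auto simp: fps_mult_nth intro!: sum.neutral)
    finally have "q $ Suc n = 0"
      by (metis mult_eq_0_iff of_nat_neq_0)
    then show ?case using Suc.IH le_Suc_eq by auto
  qed
  then show ?thesis by (auto simp: fps_eq_iff)
qed

lemma fps_linear_ode_imp_eq_0:
  fixes q P C :: "'a::field_char_0 fps"
  assumes ode: "P * fps_deriv q = C * q" and "P $ 0 \<noteq> 0" and "q $ 0 = 0"
  shows "q = 0"
proof (rule fps_deriv_eq_mult_imp_eq_0)
  have "fps_deriv q = (inverse P * P) * fps_deriv q"
    using \<open>P $ 0 \<noteq> 0\<close> by (simp add: inverse_mult_eq_1)
  then show "fps_deriv q = (inverse P * C) * q"
    by (simp add: ode mult.assoc)
qed fact

lemma of_nat_Suc_times_divide_fact_Suc: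
  "of_nat (Suc n) * (x / fact (Suc n)) = x / (fact n :: 'a::field_char_0)"
  by (metis fact_Suc nonzero_mult_divide_mult_cancel_left of_nat_neq_0 times_divide_eq_right)

definition Stirling_egf :: "'a::field_char_0 \<Rightarrow> nat \<Rightarrow> 'a fps" where
  "Stirling_egf c k = Abs_fps (\<lambda>n. c ^ n * of_nat (Stirling n k) / fact n)"

lemma fps_deriv_Stirling_egf_Suc:
  "fps_deriv (Stirling_egf c (Suc k)) =
    fps_const (c * of_nat (Suc k)) * Stirling_egf c (Suc k) + fps_const c * Stirling_egf c k"
proof (rule fps_ext)
  fix n
  have "fps_deriv (Stirling_egf c (Suc k)) $ n =
      of_nat (Suc n) * (c ^ Suc n * of_nat (Stirling (Suc n) (Suc k)) / fact (Suc n))"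
    unfolding Stirling_egf_def fps_deriv_nth fps_nth_Abs_fps by (simp only: Suc_eq_plus1)
  also have "\<dots> = c ^ Suc n * of_nat (Stirling (Suc n) (Suc k)) / fact n"
    by (rule of_nat_Suc_times_divide_fact_Suc)
  also have "\<dots> =
      (fps_const (c * of_nat (Suc k)) * Stirling_egf c (Suc k) + fps_const c * Stirling_egf c k) $ n"
    by (simp add: Stirling_egf_def algebra_simps add_divide_distrib)
  finally show "fps_deriv (Stirling_egf c (Suc k)) $ n =
      (fps_const (c * of_nat (Suc k)) * Stirling_egf c (Suc k) + fps_const c * Stirling_egf c k) $ n" .
qed

lemma fps_deriv_fps_exp_minus_1_power_Suc:
  fixes c :: "'a::field_char_0"
  defines "F \<equiv> fps_exp c - 1"
  shows "fps_deriv (F ^ Suc k) = fps_const (c * of_nat (Suc k)) * (F ^ Suc k + F ^ k)"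
proof -
  have "fps_deriv (F ^ Suc k) = fps_const (of_nat (Suc k)) * F ^ k * fps_const c * (F + 1)"
    by (simp only: fps_deriv_power diff_Suc_1) (simp add: F_def mult_ac)
  also have "\<dots> = fps_const (c * of_nat (Suc k)) * (F ^ Suc k + F ^ k)"
    by (simp only: fps_const_mult[symmetric] power_Suc distrib_left distrib_right mult_1_left mult_ac)
  finally show ?thesis .
qed

lemma fps_exp_minus_1_power:
  fixes c :: "'a::field_char_0"
  shows "(fps_exp c - 1) ^ k = fps_const (fact k) * Stirling_egf c k"
proof (induction k)
  case 0
  show ?case
  proof (rule fps_ext)
    fix n
    show "((fps_exp c - 1) ^ 0) $ n = (fps_const (fact 0) * Stirling_egf c 0) $ n"
      by (cases n) (simp_all add: Stirling_egf_def)
  qed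
next
  case (Suc k)
  define F where "F = fps_exp c - 1"
  define R where "R = Stirling_egf c"
  define q where "q = F ^ Suc k - fps_const (fact (Suc k)) * R (Suc k)"
  have "fps_deriv (fps_const (fact (Suc k)) * R (Suc k)) =
      fps_const (c * of_nat (Suc k)) * (fps_const (fact (Suc k)) * R (Suc k))
      + (fps_const (fact (Suc k)) * fps_const c) * R k"
    by (simp only: R_def fps_deriv_mult_const_left fps_deriv_Stirling_egf_Suc distrib_left mult_ac)
  also have "fps_const (fact (Suc k)) * fps_const c = fps_const (c * of_nat (Suc k)) * fps_const (fact k)"
    by (simp add: fact_Suc mult_ac)
  also have "fps_const (c * of_nat (Suc k)) * (fps_const (fact (Suc k)) * R (Suc k))
      + fps_const (c * of_nat (Suc k)) * fps_const (fact k) * R k =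
      fps_const (c * of_nat (Suc k)) * (fps_const (fact (Suc k)) * R (Suc k) + F ^ k)"
    using Suc.IH by (simp only: F_def R_def distrib_left mult.assoc)
  finally have "fps_deriv (fps_const (fact (Suc k)) * R (Suc k)) =
      fps_const (c * of_nat (Suc k)) * (fps_const (fact (Suc k)) * R (Suc k) + F ^ k)" .
  then have "fps_deriv q = fps_const (c * of_nat (Suc k)) * q"
    unfolding q_def fps_deriv_sub F_def fps_deriv_fps_exp_minus_1_power_Suc by (simp add: algebra_simps)
  moreover have "q $ 0 = 0"
    by (simp add: q_def F_def R_def Stirling_egf_def)
  ultimately have "q = 0"
    by (rule fps_deriv_eq_mult_imp_eq_0)
  then show ?case
    by (simp add: q_def F_def R_def)
qed

lemma odd_dfact_of_nat: "odd_dfact (int i) = (\<Prod>t=1..i. real (2 * t - 1))"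
  by (cases "i = 0") (simp_all add: odd_dfact_def)

lemma odd_dfact_minus_of_nat: "odd_dfact (- int i) = (-1) ^ i / (\<Prod>t=1..i. real (2 * t - 1))"
  by (cases "i = 0") (simp_all add: odd_dfact_def)

lemma odd_dfact_rec: "odd_dfact j = of_int (2 * j - 1) * odd_dfact (j - 1)"
proof -
  define P where "P i = (\<Prod>t=1..i. real (2 * t - 1))" for i
  have P_Suc: "P (Suc i) = real (2 * i + 1) * P i" for i
    by (simp add: P_def prod.cl_ivl_Suc)
  have P_pos: "P i > 0" for i
    unfolding P_def by (rule prod_pos) auto
  show ?thesis
  proof (cases j rule: int_cases)
    case (nonneg n)
    show ?thesis
    proof (cases n)
      case 0
      then show ?thesis using nonneg by (simp add: odd_dfact_def)
    next
      case (Suc i)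
      then have "j = int (Suc i)" "j - 1 = int i"
        using nonneg by simp_all
      then show ?thesis
        by (simp only: odd_dfact_of_nat flip: P_def) (simp add: P_Suc)
    qed
  next
    case (neg i)
    define r where "r = real (2 * Suc i + 1)"
    have "r > 0"
      by (simp add: r_def)
    have j: "j = - int (Suc i)" "j - 1 = - int (Suc (Suc i))"
      using neg by simp_all
    have "odd_dfact (j - 1) = - ((-1) ^ Suc i / (r * P (Suc i)))"
      unfolding j(2) odd_dfact_minus_of_nat P_def[symmetric] P_Suc[of "Suc i"] r_def by simp
    moreover have "of_int (2 * j - 1) = - r"
      unfolding j(1) r_def by simp
    ultimately show ?thesis
      using \<open>r > 0\<close> unfolding j(1) odd_dfact_minus_of_nat P_def[symmetric] by simp
  qed
qed

definition odd_dfact_egf :: "real fps" where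
  "odd_dfact_egf = Abs_fps (\<lambda>k. (-1) ^ k * odd_dfact (int k - 1) / fact k)"

lemma odd_dfact_egf_nth_Suc: "of_nat (Suc k) * odd_dfact_egf $ Suc k = (1 - 2 * of_nat k) * odd_dfact_egf $ k"
proof -
  have rec: "odd_dfact (int (Suc k) - 1) = (2 * of_nat k - 1) * odd_dfact (int k - 1)"
    using odd_dfact_rec[of "int k"] by simp
  have "of_nat (Suc k) * odd_dfact_egf $ Suc k = (-1) ^ Suc k * odd_dfact (int (Suc k) - 1) / fact k"
    unfolding odd_dfact_egf_def fps_nth_Abs_fps by (rule of_nat_Suc_times_divide_fact_Suc)
  also have "\<dots> = (1 - 2 * of_nat k) * ((-1) ^ k * odd_dfact (int k - 1)) / fact k"
    unfolding rec by (simp add: algebra_simps)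
  also have "\<dots> = (1 - 2 * of_nat k) * odd_dfact_egf $ k"
    by (simp add: odd_dfact_egf_def)
  finally show ?thesis .
qed

lemma odd_dfact_egf_ode: "(1 + 2 * fps_X) * fps_deriv odd_dfact_egf = odd_dfact_egf"
proof (rule fps_ext)
  fix n
  have deriv_nth: "fps_deriv odd_dfact_egf $ m = of_nat (Suc m) * odd_dfact_egf $ Suc m" for m
    by simp
  show "((1 + 2 * fps_X) * fps_deriv odd_dfact_egf) $ n = odd_dfact_egf $ n"
  proof (cases n)
    case 0
    then show ?thesis
      using odd_dfact_egf_nth_Suc[of 0] by (simp add: distrib_right fps_numeral_fps_const)
  next
    case (Suc m)
    then show ?thesis
      using odd_dfact_egf_nth_Suc[of "Suc m"]
      by (simp add: distrib_right fps_numeral_fps_const deriv_nth del: fps_deriv_nth)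
        (simp add: algebra_simps)
  qed
qed

lemma odd_dfact_egf_square: "odd_dfact_egf ^ 2 = 1 + 2 * fps_X"
proof -
  define q where "q = odd_dfact_egf ^ 2 - (1 + 2 * fps_X)"
  have dq: "fps_deriv q = 2 * odd_dfact_egf * fps_deriv odd_dfact_egf - 2"
    by (simp add: q_def power2_eq_square algebra_simps)
  have "(1 + 2 * fps_X) * fps_deriv q =
      2 * odd_dfact_egf * ((1 + 2 * fps_X) * fps_deriv odd_dfact_egf) - 2 * (1 + 2 * fps_X)"
    unfolding dq by (simp add: algebra_simps)
  also have "\<dots> = 2 * q"
    unfolding odd_dfact_egf_ode q_def by (simp add: algebra_simps power2_eq_square)
  finally have ode: "(1 + 2 * fps_X) * fps_deriv q = 2 * q" .
  have q0: "q $ 0 = 0"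
    by (simp add: q_def odd_dfact_egf_def fps_nth_power_0 odd_dfact_def)
  have "q = 0"
    by (rule fps_linear_ode_imp_eq_0[OF ode _ q0]) simp
  then show ?thesis
    by (simp add: q_def)
qed

lemma d_seq_egf: "Abs_fps d_seq = odd_dfact_egf oo (fps_exp (-1) - 1)"
proof (rule fps_ext)
  fix n
  have "(odd_dfact_egf oo (fps_exp (-1) - 1)) $ n =
      (\<Sum>k=0..n. odd_dfact_egf $ k * (fact k * ((-1) ^ n * of_nat (Stirling n k) / fact n)))"
    by (simp add: fps_compose_nth fps_exp_minus_1_power Stirling_egf_def)
  also have "\<dots> = d_seq n"
    unfolding d_seq_def odd_dfact_egf_def by (simp add: sum_distrib_left mult_ac)
  finally show "Abs_fps d_seq $ n = (odd_dfact_egf oo (fps_exp (-1) - 1)) $ n"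
    by simp
qed

lemma d_seq_egf_square: "Abs_fps d_seq ^ 2 = 2 * fps_exp (-1) - 1"
proof -
  have F0: "(fps_exp (-1) - 1 :: real fps) $ 0 = 0"
    by simp
  have "Abs_fps d_seq ^ 2 = (1 + 2 * fps_X) oo (fps_exp (-1) - 1)"
    unfolding d_seq_egf fps_compose_power[OF F0] odd_dfact_egf_square ..
  also have "\<dots> = 1 + 2 * (fps_exp (-1) - 1)"
    by (simp add: fps_compose_add_distrib fps_compose_mult_distrib[OF F0] fps_numeral_fps_const)
  finally show ?thesis
    by (simp add: algebra_simps)
qed

lemma d_seq_egf_ode: "2 * Abs_fps d_seq * fps_deriv (Abs_fps d_seq) + Abs_fps d_seq ^ 2 + 1 = 0"
proof -
  have "2 * Abs_fps d_seq * fps_deriv (Abs_fps d_seq) = fps_deriv (Abs_fps d_seq ^ 2)"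
    by (simp add: power2_eq_square algebra_simps)
  also have "\<dots> = - 2 * fps_exp (-1)"
    by (simp add: d_seq_egf_square fps_numeral_fps_const)
  finally show ?thesis
    by (simp add: d_seq_egf_square)
qed

lemma fps_square_ode_nth:
  fixes D :: "real fps"
  assumes ode: "2 * D * fps_deriv D + D ^ 2 + 1 = 0"
  shows "2 * (\<Sum>i=0..n. D $ i * (of_nat (n - i + 1) * D $ (n - i + 1)))
      + (\<Sum>i=0..n. D $ i * D $ (n - i)) + (if n = 0 then 1 else 0) = 0"
proof -
  have "(2 * D * fps_deriv D) $ n = 2 * (\<Sum>i=0..n. D $ i * (of_nat (n - i + 1) * D $ (n - i + 1)))"
    by (simp only: mult.assoc fps_numeral_fps_const fps_mult_left_const_nth)
      (simp only: fps_mult_nth fps_deriv_nth)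
  moreover have "(D ^ 2) $ n = (\<Sum>i=0..n. D $ i * D $ (n - i))"
    by (simp add: power2_eq_square fps_mult_nth)
  moreover have "(2 * D * fps_deriv D + D ^ 2 + 1) $ n = 0"
    using ode by simp
  ultimately show ?thesis
    by simp
qed

lemma fps_square_ode_nth_nonneg:
  fixes D :: "real fps"
  assumes ode: "2 * D * fps_deriv D + D ^ 2 + 1 = 0" and D0: "D $ 0 = -1" and "n \<ge> 1"
  shows "D $ n \<ge> 0"
  using \<open>n \<ge> 1\<close>
proof (induction n rule: less_induct)
  case (less n)
  have D1: "D $ Suc 0 = 1"
    using fps_square_ode_nth[OF ode, of 0] D0 by simp
  show ?case
  proof (cases "n = 1")
    case True
    then show ?thesis using D1 by simp
  next
    case False
    then obtain m where n: "n = Suc (Suc m)"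
      using less.prems by (metis One_nat_def Suc_le_D le_SucE not0_implies_Suc)
    have IH: "D $ j \<ge> 0" if "1 \<le> j" "j \<le> Suc m" for j
      using less.IH[of j] that n by simp
    define A where "A = (\<Sum>i=1..m. D $ i * (of_nat (Suc m - i + 1) * D $ (Suc m - i + 1)))"
    define B where "B = (\<Sum>i=1..m. D $ i * D $ (Suc m - i))"
    have "A \<ge> 0" "B \<ge> 0"
      unfolding A_def B_def by (auto intro!: sum_nonneg mult_nonneg_nonneg IH)
    have split: "(\<Sum>i=0..Suc m. f i) = f 0 + (\<Sum>i=1..m. f i) + f (Suc m)" for f :: "nat \<Rightarrow> real"
      by (simp add: sum.atLeast0_atMost_Suc sum.atLeast_Suc_atMost)
    have "2 * (- (of_nat (Suc m + 1) * D $ Suc (Suc m)) + A + D $ Suc m) + (- 2 * D $ Suc m + B) = 0"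
      using fps_square_ode_nth[OF ode, of "Suc m"] unfolding split A_def B_def by (simp add: D0 D1)
    then have "D $ Suc (Suc m) = (2 * A + B) / (2 * of_nat (Suc m + 1))"
      by (simp add: field_simps)
    then show ?thesis
      using \<open>A \<ge> 0\<close> \<open>B \<ge> 0\<close> n by simp
  qed
qed

theorem theorem6p4:
  fixes n :: nat
  assumes "n \<ge> 1"
  shows "d_seq n \<ge> 0"
proof -
  have "Abs_fps d_seq $ 0 = -1"
    by (simp add: d_seq_def odd_dfact_def)
  from fps_square_ode_nth_nonneg[OF d_seq_egf_ode this assms] show ?thesis
    by simp
qed

end
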